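(* Let $R\subset S$ be a distributive FCP ring extension with Loewy series $\{S_i\}_{i=0}^n$. Then: (1) $\pounds[R,S]=\ell[R,S]$ if and only if $[R,S]$ is a chain; in this case $[R,S]=\{S_i\}_{i=0}^n$. (2) $\pounds[R,S]=1$ if and only if $R\subset S$ is Boolean.
   Context: All rings are commutative with identity. $[R,S]$ is the lattice of $R$-subalgebras of $S$ (meet = intersection, join = product). FCP: every chain in $[R,S]$ is finite. $T\subset U$ minimal means $[T,U]=\{T,U\}$; atoms of $[R,S]$ are $T$ with $R\subset T$ minimal; the socle $\mathcal S[R,S]$ is the product of all atoms. Loewy series: $S_0=R$, $S_{i+1}=\mathcal S[S_i,S]$ while $S_i\neq S$; $\pounds[R,S]$ is the least $n$ with $S_n=S$. $\ell[R,S]$ is the supremum of lengths of chains in $[R,S]$. Distributive: $[R,S]$ is a distributive lattice; Boolean: distributive and every $T\in[R,S]$ has a complement $T'$ ($T\cap T'=R$, $TT'=S$). *)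

theory Defs
  imports Main "HOL-Library.Extended_Nat"
begin

text \<open>A ring extension R \<subseteq> S is modelled by two subrings R \<subseteq> S of an ambient
  type 'a :: comm_ring_1; R-subalgebras of S are exactly the subrings T
  with R \<subseteq> T \<subseteq> S.\<close>

definition subring :: "'a::comm_ring_1 set \<Rightarrow> bool" where
  "subring A \<longleftrightarrow> 1 \<in> A \<and> (\<forall>x\<in>A. \<forall>y\<in>A. x + y \<in> A \<and> x * y \<in> A) \<and> (\<forall>x\<in>A. - x \<in> A)"

definition interm :: "'a::comm_ring_1 set \<Rightarrow> 'a set \<Rightarrow> 'a set set" where
  "interm R S = {T. subring T \<and> R \<subseteq> T \<and> T \<subseteq> S}"

definition gen_ring :: "'a::comm_ring_1 set \<Rightarrow> 'a set" where
  "gen_ring A = \<Inter>{T. subring T \<and> A \<subseteq> T}"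

definition ring_prod :: "'a::comm_ring_1 set \<Rightarrow> 'a set \<Rightarrow> 'a set" where
  "ring_prod T U = gen_ring (T \<union> U)"

definition FCP :: "'a::comm_ring_1 set \<Rightarrow> 'a set \<Rightarrow> bool" where
  "FCP R S \<longleftrightarrow> (\<forall>C. C \<subseteq> interm R S \<and> (\<forall>T\<in>C. \<forall>U\<in>C. T \<subseteq> U \<or> U \<subseteq> T) \<longrightarrow> finite C)"

definition minimal_ext :: "'a::comm_ring_1 set \<Rightarrow> 'a set \<Rightarrow> bool" where
  "minimal_ext T U \<longleftrightarrow> T \<subset> U \<and> interm T U = {T, U}"

definition atoms :: "'a::comm_ring_1 set \<Rightarrow> 'a set \<Rightarrow> 'a set set" where
  "atoms R S = {T \<in> interm R S. minimal_ext R T}"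

definition socle :: "'a::comm_ring_1 set \<Rightarrow> 'a set \<Rightarrow> 'a set" where
  "socle R S = gen_ring (R \<union> \<Union>(atoms R S))"

primrec loewy :: "'a::comm_ring_1 set \<Rightarrow> 'a set \<Rightarrow> nat \<Rightarrow> 'a set" where
  "loewy R S 0 = R"
| "loewy R S (Suc i) = (if loewy R S i = S then S else socle (loewy R S i) S)"

definition loewy_length :: "'a::comm_ring_1 set \<Rightarrow> 'a set \<Rightarrow> nat" where
  "loewy_length R S = (LEAST n. loewy R S n = S)"

definition ext_length :: "'a::comm_ring_1 set \<Rightarrow> 'a set \<Rightarrow> enat" where
  "ext_length R S = Sup {enat (card C - 1) | C. C \<subseteq> interm R S \<and> finite C \<and> C \<noteq> {}
                          \<and> (\<forall>T\<in>C. \<forall>U\<in>C. T \<subseteq> U \<or> U \<subseteq> T)}"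

definition is_chain_ext :: "'a::comm_ring_1 set \<Rightarrow> 'a set \<Rightarrow> bool" where
  "is_chain_ext R S \<longleftrightarrow> (\<forall>T\<in>interm R S. \<forall>U\<in>interm R S. T \<subseteq> U \<or> U \<subseteq> T)"

definition distributive_ext :: "'a::comm_ring_1 set \<Rightarrow> 'a set \<Rightarrow> bool" where
  "distributive_ext R S \<longleftrightarrow>
     (\<forall>T\<in>interm R S. \<forall>U\<in>interm R S. \<forall>V\<in>interm R S.
        T \<inter> ring_prod U V = ring_prod (T \<inter> U) (T \<inter> V))"

definition boolean_ext :: "'a::comm_ring_1 set \<Rightarrow> 'a set \<Rightarrow> bool" where
  "boolean_ext R S \<longleftrightarrow> distributive_ext R S \<and>
     (\<forall>T\<in>interm R S. \<exists>T'\<in>interm R S. T \<inter> T' = R \<and> ring_prod T T' = S)"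

end

theory Submission
  imports Defs
begin

(* The Loewy series R = S_0 \<subset> S_1 \<subset> ... \<subset> S_n = S is strictly increasing, since FCP
  provides an atom of [S_i,S] whenever S_i \<noteq> S; hence it is a chain of length n, and [R,S]
  has length at least n.  The crux of (1): if for each i < n the only atom of [S_i,S] is
  S_(i+1), then every T \<in> [R,S] is some S_j (take the largest j with S_j \<subseteq> T; an atom of
  [S_j,S] below T would be S_(j+1)).  In a chain each [S_i,S] has one atom, which is then its
  socle S_(i+1); and if [R,S] has length n, an atom of [S_i,S] other than S_(i+1) would lie
  strictly between S_i and S_(i+1) and lengthen the Loewy chain.  Distributivity is only
  needed for (2).

  For (2), Loewy length 1 means that the atoms generate S.  A complement of the socle must be
  R, as an atom below it would also lie below the socle.  Conversely, by distributivity a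
  maximal U with T \<inter> U = R lies above every atom not below T, so T U contains all atoms
  and is S. *)

lemma subring_Int: "subring A \<Longrightarrow> subring B \<Longrightarrow> subring (A \<inter> B)"
  by (auto simp: subring_def)

lemma subring_Inter: "(\<And>T. T \<in> F \<Longrightarrow> subring T) \<Longrightarrow> subring (\<Inter>F)"
  by (auto simp: subring_def)

lemma subring_gen_ring: "subring (gen_ring A)"
  unfolding gen_ring_def by (rule subring_Inter) blast

lemma gen_ring_upper: "A \<subseteq> gen_ring A"
  unfolding gen_ring_def by blast

lemma gen_ring_least: "subring T \<Longrightarrow> A \<subseteq> T \<Longrightarrow> gen_ring A \<subseteq> T"
  unfolding gen_ring_def by blast

lemma ring_prod_upper1: "T \<subseteq> ring_prod T U"
  unfolding ring_prod_def using gen_ring_upper by blast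

lemma ring_prod_upper2: "U \<subseteq> ring_prod T U"
  unfolding ring_prod_def using gen_ring_upper by blast

lemma ring_prod_least: "subring V \<Longrightarrow> T \<subseteq> V \<Longrightarrow> U \<subseteq> V \<Longrightarrow> ring_prod T U \<subseteq> V"
  unfolding ring_prod_def by (simp add: gen_ring_least)

lemma ring_prod_idem: "subring R \<Longrightarrow> ring_prod R R = R"
  by (rule subset_antisym[OF ring_prod_least ring_prod_upper1]) auto

lemma ring_prod_in_interm:
  "subring S \<Longrightarrow> T \<in> interm R S \<Longrightarrow> U \<in> interm R S \<Longrightarrow> ring_prod T U \<in> interm R S"
  unfolding interm_def using ring_prod_least[of S T U] ring_prod_upper1[of T U]
  by (auto simp: ring_prod_def subring_gen_ring)

lemma interm_subset_interm: "T \<in> interm R S \<Longrightarrow> interm T S \<subseteq> interm R S"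
  by (auto simp: interm_def)

section \<open>Consequences of FCP\<close>

lemma FCP_chain_finite:
  "FCP R S \<Longrightarrow> C \<subseteq> interm R S \<Longrightarrow> (\<And>T U. T \<in> C \<Longrightarrow> U \<in> C \<Longrightarrow> T \<subseteq> U \<or> U \<subseteq> T)
    \<Longrightarrow> finite C"
  unfolding FCP_def by blast

lemma FCP_no_strict_chain:
  fixes f :: "nat \<Rightarrow> 'a::comm_ring_1 set"
  assumes "FCP R S" "range f \<subseteq> interm R S"
    and strict: "\<And>i j. i < j \<Longrightarrow> f i \<subset> f j \<or> f j \<subset> f i"
  shows False
proof -
  have "finite (range f)"
  proof (rule FCP_chain_finite[OF assms(1,2)])
    fix T U assume "T \<in> range f" "U \<in> range f"
    then obtain i j where "T = f i" "U = f j"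
      by blast
    then show "T \<subseteq> U \<or> U \<subseteq> T"
      using strict[of i j] strict[of j i] by (cases i j rule: linorder_cases) auto
  qed
  moreover have "inj f"
  proof (rule linorder_injI)
    fix i j :: nat
    assume "i < j"
    then show "f i \<noteq> f j"
      using strict[of i j] by auto
  qed
  ultimately show False
    using finite_imageD[of f UNIV] by simp
qed

lemma FCP_wf_psubset:
  assumes "FCP R S"
  shows "wf {(T, U). T \<in> interm R S \<and> U \<in> interm R S \<and> T \<subset> U}" (is "wf ?r")
  unfolding wf_iff_no_infinite_down_chain
proof (intro notI, elim exE)
  fix f assume f: "\<forall>i. (f (Suc i), f i) \<in> ?r"
  have "i < j \<Longrightarrow> f j \<subset> f i" for i j
  proof (induction rule: less_Suc_induct)
    case (1 i)
    show ?case using f by blast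
  next
    case (2 i j k)
    then show ?case by (meson order.strict_trans)
  qed
  moreover have "range f \<subseteq> interm R S"
    using f by blast
  ultimately show False
    using FCP_no_strict_chain[OF assms, of f] by blast
qed

lemma FCP_wf_psupset:
  assumes "FCP R S"
  shows "wf {(U, T). T \<in> interm R S \<and> U \<in> interm R S \<and> T \<subset> U}" (is "wf ?r")
  unfolding wf_iff_no_infinite_down_chain
proof (intro notI, elim exE)
  fix f assume f: "\<forall>i. (f (Suc i), f i) \<in> ?r"
  have "i < j \<Longrightarrow> f i \<subset> f j" for i j
  proof (induction rule: less_Suc_induct)
    case (1 i)
    show ?case using f by blast
  next
    case (2 i j k)
    then show ?case by (meson order.strict_trans)
  qed
  moreover have "range f \<subseteq> interm R S"
    using f by blast
  ultimately show False
    using FCP_no_strict_chain[OF assms, of f] by blast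
qed

lemma FCP_has_minimal:
  assumes "FCP R S" "X \<subseteq> interm R S" "X0 \<in> X"
  obtains M where "M \<in> X" "\<And>U. U \<in> X \<Longrightarrow> \<not> U \<subset> M"
proof -
  obtain M where "M \<in> X"
    and "\<And>U. (U, M) \<in> {(T, U). T \<in> interm R S \<and> U \<in> interm R S \<and> T \<subset> U} \<Longrightarrow> U \<notin> X"
    using wfE_min[OF FCP_wf_psubset[OF assms(1)] assms(3)] by blast
  with assms(2) show ?thesis
    using that by blast
qed

lemma FCP_has_maximal:
  assumes "FCP R S" "X \<subseteq> interm R S" "X0 \<in> X"
  obtains M where "M \<in> X" "\<And>U. U \<in> X \<Longrightarrow> \<not> M \<subset> U"
proof -
  obtain M where "M \<in> X"
    and "\<And>U. (U, M) \<in> {(U, T). T \<in> interm R S \<and> U \<in> interm R S \<and> T \<subset> U} \<Longrightarrow> U \<notin> X"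
    using wfE_min[OF FCP_wf_psupset[OF assms(1)] assms(3)] by blast
  with assms(2) show ?thesis
    using that by blast
qed

section \<open>Atoms and the socle\<close>

lemma atoms_psubset: "A \<in> atoms T S \<Longrightarrow> T \<subset> A"
  by (simp add: atoms_def minimal_ext_def)

lemma atoms_in_interm: "T \<in> interm R S \<Longrightarrow> A \<in> atoms T S \<Longrightarrow> A \<in> interm R S"
  unfolding atoms_def using interm_subset_interm by blast

lemma atom_eq_if_subset:
  assumes "A \<in> atoms T S" "B \<in> atoms T S" "A \<subseteq> B"
  shows "A = B"
proof -
  have "A \<in> interm T B"
    using assms by (auto simp: atoms_def interm_def)
  then show ?thesis
    using assms(1,2) by (auto simp: atoms_def minimal_ext_def)
qed

lemma exists_atom_below:
  assumes "FCP R S" "T \<in> interm R S" "U \<in> interm R S" "T \<subset> U"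
  shows "\<exists>A\<in>atoms T S. A \<subseteq> U"
proof -
  let ?X = "{V \<in> interm T S. T \<subset> V \<and> V \<subseteq> U}"
  have X: "?X \<subseteq> interm R S" and U: "U \<in> ?X"
    using assms(2-4) by (auto simp: interm_def)
  obtain M where M: "M \<in> ?X" and min: "\<And>V. V \<in> ?X \<Longrightarrow> \<not> V \<subset> M"
    using FCP_has_minimal[OF assms(1) X U] by blast
  have "interm T M = {T, M}"
  proof (intro equalityI subsetI)
    fix V assume V: "V \<in> interm T M"
    then have "V = T \<or> V \<in> ?X"
      using M by (auto simp: interm_def)
    then show "V \<in> {T, M}"
      using min V by (auto simp: interm_def)
  qed (use M assms(2) in \<open>auto simp: interm_def\<close>)
  with M show ?thesis
    by (auto simp: atoms_def minimal_ext_def)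
qed

lemma subset_socle: "T \<subseteq> socle T S"
  unfolding socle_def using gen_ring_upper by (rule le_supE)

lemma socle_in_interm:
  assumes "subring S" "T \<in> interm R S"
  shows "socle T S \<in> interm T S"
proof -
  have "T \<union> \<Union>(atoms T S) \<subseteq> S"
    using assms(2) by (auto simp: atoms_def interm_def)
  then have "socle T S \<subseteq> S"
    unfolding socle_def by (rule gen_ring_least[OF assms(1)])
  with subset_socle[of T S] show ?thesis
    unfolding interm_def socle_def by (simp add: subring_gen_ring)
qed

lemma atom_subset_socle: "A \<in> atoms T S \<Longrightarrow> A \<subseteq> socle T S"
  unfolding socle_def by (rule subset_trans[OF _ gen_ring_upper]) blast

lemma socle_least:
  "subring P \<Longrightarrow> T \<subseteq> P \<Longrightarrow> (\<And>A. A \<in> atoms T S \<Longrightarrow> A \<subseteq> P) \<Longrightarrow> socle T S \<subseteq> P"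
  unfolding socle_def by (rule gen_ring_least, assumption, rule Un_least, assumption, rule Union_least)

lemma socle_eq_greatest_atom:
  assumes "A \<in> atoms T S" "\<And>B. B \<in> atoms T S \<Longrightarrow> B \<subseteq> A"
  shows "socle T S = A"
proof (rule subset_antisym)
  show "socle T S \<subseteq> A"
    using assms atoms_psubset[OF assms(1)]
    by (intro socle_least) (auto simp: atoms_def interm_def)
  show "A \<subseteq> socle T S"
    by (rule atom_subset_socle[OF assms(1)])
qed

lemma chain_card_le_ext_length:
  assumes "C \<subseteq> interm R S" "finite C" "C \<noteq> {}" "\<forall>T\<in>C. \<forall>U\<in>C. T \<subseteq> U \<or> U \<subseteq> T"
  shows "enat (card C - 1) \<le> ext_length R S"
  unfolding ext_length_def
proof (rule Sup_upper, intro CollectI exI conjI)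
  show "enat (card C - 1) = enat (card C - 1)" ..
qed (use assms in auto)

lemma ext_length_of_chain:
  assumes "is_chain_ext R S" "finite (interm R S)" "interm R S \<noteq> {}"
  shows "ext_length R S = enat (card (interm R S) - 1)"
proof (rule antisym)
  show "ext_length R S \<le> enat (card (interm R S) - 1)"
    unfolding ext_length_def
  proof (rule Sup_least)
    fix l assume "l \<in> {enat (card C - 1) | C. C \<subseteq> interm R S \<and> finite C \<and> C \<noteq> {}
                          \<and> (\<forall>T\<in>C. \<forall>U\<in>C. T \<subseteq> U \<or> U \<subseteq> T)}"
    then obtain C where "l = enat (card C - 1)" "C \<subseteq> interm R S"
      by blast
    then show "l \<le> enat (card (interm R S) - 1)"
      using card_mono[OF assms(2)] by (simp add: diff_le_mono)
  qed
  show "enat (card (interm R S) - 1) \<le> ext_length R S"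
    using assms by (intro chain_card_le_ext_length) (auto simp: is_chain_ext_def)
qed

section \<open>The Loewy series\<close>

lemma loewy_Suc_subset: "loewy R S i \<subseteq> loewy R S (Suc i)"
  by (simp add: subset_socle)

lemma loewy_mono: "i \<le> j \<Longrightarrow> loewy R S i \<subseteq> loewy R S j"
  by (rule lift_Suc_mono_le[of "loewy R S", OF loewy_Suc_subset])

lemma loewy_comparable: "loewy R S i \<subseteq> loewy R S j \<or> loewy R S j \<subseteq> loewy R S i"
  by (metis loewy_mono nat_le_linear)

lemma loewy_neq_before_length: "i < loewy_length R S \<Longrightarrow> loewy R S i \<noteq> S"
  unfolding loewy_length_def by (rule not_less_Least)

lemma strictly_between_loewy_comparable:
  assumes "loewy R S i \<subset> A" "A \<subset> loewy R S (Suc i)"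
  shows "A \<subset> loewy R S j \<or> loewy R S j \<subset> A"
proof (cases "j \<le> i")
  case True
  then show ?thesis using loewy_mono[of j i] assms(1) by auto
next
  case False
  then show ?thesis using loewy_mono[of "Suc i" j] assms(2) by auto
qed

locale fcp_extension =
  fixes R S :: "'a::comm_ring_1 set"
  assumes subring_R: "subring R" and subring_S: "subring S" and subset_S: "R \<subseteq> S"
    and FCP: "FCP R S"
begin

lemma base_in_interm: "R \<in> interm R S"
  using subring_R subset_S by (simp add: interm_def)

lemma top_in_interm: "S \<in> interm R S"
  using subring_S subset_S by (simp add: interm_def)

lemma loewy_in_interm: "loewy R S i \<in> interm R S"
proof (induction i)
  case 0
  show ?case by (simp add: base_in_interm)
next
  case (Suc i)
  show ?case
    using subsetD[OF interm_subset_interm[OF Suc.IH] socle_in_interm[OF subring_S Suc.IH]]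
      top_in_interm
    by simp
qed

lemma loewy_Suc_psubset:
  assumes "loewy R S i \<noteq> S"
  shows "loewy R S i \<subset> loewy R S (Suc i)"
proof -
  have "loewy R S i \<subset> S"
    using loewy_in_interm[of i] assms by (auto simp: interm_def)
  then obtain A where A: "A \<in> atoms (loewy R S i) S"
    using exists_atom_below[OF FCP loewy_in_interm top_in_interm] by blast
  show ?thesis
    using atoms_psubset[OF A] atom_subset_socle[OF A] assms by auto
qed

lemma loewy_at_length: "loewy R S (loewy_length R S) = S"
proof -
  have "\<exists>n. loewy R S n = S"
  proof (rule ccontr)
    assume never: "\<nexists>n. loewy R S n = S"
    have "i < j \<Longrightarrow> loewy R S i \<subset> loewy R S j" for i j
    proof (induction rule: less_Suc_induct)
      case (1 i)
      show ?case by (rule loewy_Suc_psubset) (use never in blast)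
    next
      case (2 i j k)
      then show ?case by (meson order.strict_trans)
    qed
    then show False
      using FCP_no_strict_chain[OF FCP, of "loewy R S"] loewy_in_interm by blast
  qed
  then show ?thesis
    unfolding loewy_length_def by (rule LeastI_ex)
qed

lemma loewy_strict_mono:
  "i < j \<Longrightarrow> j \<le> loewy_length R S \<Longrightarrow> loewy R S i \<subset> loewy R S j"
proof (induction rule: less_Suc_induct)
  case (1 i)
  then show ?case by (intro loewy_Suc_psubset loewy_neq_before_length) simp
next
  case (2 i j k)
  then show ?case by (meson order.strict_trans less_imp_le order.trans)
qed

lemma card_loewy_series: "card (loewy R S ` {0..loewy_length R S}) = Suc (loewy_length R S)"
proof -
  have "inj_on (loewy R S) {0..loewy_length R S}"
  proof (rule inj_onI)
    fix i j assume "i \<in> {0..loewy_length R S}" "j \<in> {0..loewy_length R S}"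
      and "loewy R S i = loewy R S j"
    then show "i = j"
      by (cases i j rule: linorder_cases) (auto dest: loewy_strict_mono)
  qed
  then show ?thesis
    by (simp add: card_image)
qed

lemma interm_eq_loewy_series:
  assumes atoms_eq: "\<And>i A. i < loewy_length R S \<Longrightarrow> A \<in> atoms (loewy R S i) S
    \<Longrightarrow> A = loewy R S (Suc i)"
  shows "interm R S = loewy R S ` {0..loewy_length R S}"
proof (intro equalityI subsetI)
  fix T assume T: "T \<in> interm R S"
  let ?n = "loewy_length R S"
  let ?J = "{j. j \<le> ?n \<and> loewy R S j \<subseteq> T}"
  have fin: "finite ?J"
    by (rule finite_subset[of _ "{..?n}"]) auto
  have "0 \<in> ?J"
    using T by (simp add: interm_def)
  define j where "j = Max ?J"
  have "j \<in> ?J"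
    unfolding j_def by (rule Max_in[OF fin]) (use \<open>0 \<in> ?J\<close> in blast)
  then have j: "j \<le> ?n" "loewy R S j \<subseteq> T"
    by auto
  have j_max: "k \<le> j" if "k \<le> ?n" "loewy R S k \<subseteq> T" for k
    unfolding j_def using fin that by (intro Max_ge) auto
  have "loewy R S j = T"
  proof (rule ccontr)
    assume neq: "loewy R S j \<noteq> T"
    then have "j \<noteq> ?n"
      using j T loewy_at_length by (auto simp: interm_def)
    with j have "j < ?n" by simp
    obtain A where "A \<in> atoms (loewy R S j) S" "A \<subseteq> T"
      using exists_atom_below[OF FCP loewy_in_interm T] j(2) neq by blast
    with atoms_eq[OF \<open>j < ?n\<close>] have "loewy R S (Suc j) \<subseteq> T" by simp
    with j_max[of "Suc j"] \<open>j < ?n\<close> show False by simp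
  qed
  with j(1) show "T \<in> loewy R S ` {0..?n}" by auto
qed (auto simp: loewy_in_interm)

lemma loewy_Suc_eq_atom_if_chain:
  assumes "is_chain_ext R S" "i < loewy_length R S" "A \<in> atoms (loewy R S i) S"
  shows "A = loewy R S (Suc i)"
proof -
  have "B \<subseteq> A" if "B \<in> atoms (loewy R S i) S" for B
    using assms(1) atoms_in_interm[OF loewy_in_interm] atom_eq_if_subset[OF assms(3) that]
      that assms(3)
    unfolding is_chain_ext_def by blast
  then have "socle (loewy R S i) S = A"
    by (rule socle_eq_greatest_atom[OF assms(3)])
  with loewy_neq_before_length[OF assms(2)] show ?thesis by simp
qed

lemma loewy_Suc_eq_atom_if_length:
  assumes "ext_length R S = enat (loewy_length R S)"
    and "i < loewy_length R S" "A \<in> atoms (loewy R S i) S"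
  shows "A = loewy R S (Suc i)"
proof (rule ccontr)
  assume neq: "A \<noteq> loewy R S (Suc i)"
  let ?n = "loewy_length R S" and ?C = "loewy R S ` {0..loewy_length R S}"
  have "A \<subseteq> loewy R S (Suc i)"
    using atom_subset_socle[OF assms(3)] loewy_neq_before_length[OF assms(2)] by simp
  then have between: "A \<subset> loewy R S j \<or> loewy R S j \<subset> A" for j
    using strictly_between_loewy_comparable atoms_psubset[OF assms(3)] neq by blast
  then have "A \<notin> ?C" by blast
  then have "card (insert A ?C) - 1 = Suc ?n"
    by (simp add: card_loewy_series)
  moreover have "enat (card (insert A ?C) - 1) \<le> ext_length R S"
    using between loewy_comparable atoms_in_interm[OF loewy_in_interm assms(3)] loewy_in_interm
    by (intro chain_card_le_ext_length) blast+
  ultimately show False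
    using assms(1) by simp
qed

lemma interm_eq_loewy_series_if_chain:
  assumes "is_chain_ext R S"
  shows "interm R S = loewy R S ` {0..loewy_length R S}"
  using loewy_Suc_eq_atom_if_chain[OF assms] by (rule interm_eq_loewy_series)

lemma chain_iff_ext_length_eq_loewy_length:
  "is_chain_ext R S \<longleftrightarrow> ext_length R S = enat (loewy_length R S)"
proof
  assume chain: "is_chain_ext R S"
  then have series: "interm R S = loewy R S ` {0..loewy_length R S}"
    by (rule interm_eq_loewy_series_if_chain)
  have "ext_length R S = enat (card (interm R S) - 1)"
    using chain by (rule ext_length_of_chain) (simp_all add: series)
  also have "\<dots> = enat (loewy_length R S)"
    unfolding series card_loewy_series by simp
  finally show "ext_length R S = enat (loewy_length R S)" .
next
  assume "ext_length R S = enat (loewy_length R S)"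
  then have series: "interm R S = loewy R S ` {0..loewy_length R S}"
    by (intro interm_eq_loewy_series) (rule loewy_Suc_eq_atom_if_length)
  show "is_chain_ext R S"
    unfolding is_chain_ext_def
  proof (intro ballI)
    fix T U assume "T \<in> interm R S" "U \<in> interm R S"
    then obtain i j where "T = loewy R S i" "U = loewy R S j"
      unfolding series by blast
    then show "T \<subseteq> U \<or> U \<subseteq> T"
      by (simp add: loewy_comparable)
  qed
qed

lemma loewy_length_eq_1_iff:
  assumes "R \<noteq> S"
  shows "loewy_length R S = 1 \<longleftrightarrow> socle R S = S"
proof
  assume "loewy_length R S = 1"
  with loewy_at_length assms show "socle R S = S"
    by simp
next
  assume "socle R S = S"
  with assms have "loewy R S 1 = S"
    by simp
  then have "loewy_length R S \<le> 1"
    unfolding loewy_length_def by (rule Least_le)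
  moreover have "loewy_length R S \<noteq> 0"
    using loewy_at_length assms by (metis loewy.simps(1))
  ultimately show "loewy_length R S = 1"
    by simp
qed

lemma socle_eq_top_if_boolean:
  assumes "boolean_ext R S"
  shows "socle R S = S"
proof (rule ccontr)
  assume ne: "socle R S \<noteq> S"
  have socle: "socle R S \<in> interm R S"
    using socle_in_interm[OF subring_S base_in_interm] .
  then obtain C where C: "C \<in> interm R S" "socle R S \<inter> C = R" "ring_prod (socle R S) C = S"
    using assms unfolding boolean_ext_def by blast
  have "C \<noteq> R"
  proof
    assume "C = R"
    then have "ring_prod (socle R S) C \<subseteq> socle R S"
      using socle subset_socle[of R S] by (intro ring_prod_least) (auto simp: interm_def)
    with C(3) ne socle show False
      by (auto simp: interm_def)
  qed
  with C(1) have "R \<subset> C"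
    by (auto simp: interm_def)
  then obtain A where A: "A \<in> atoms R S" "A \<subseteq> C"
    using exists_atom_below[OF FCP base_in_interm C(1)] by blast
  with C(2) atom_subset_socle[OF A(1)] have "A \<subseteq> R"
    by blast
  with atoms_psubset[OF A(1)] show False
    by blast
qed

lemma atom_subset_prod_if_maximal_disjoint:
  assumes distrib: "distributive_ext R S"
    and T: "T \<in> interm R S" and U: "U \<in> interm R S" "T \<inter> U = R"
    and U_max: "\<And>V. V \<in> interm R S \<Longrightarrow> T \<inter> V = R \<Longrightarrow> U \<subseteq> V \<Longrightarrow> V = U"
    and A: "A \<in> atoms R S"
  shows "A \<subseteq> ring_prod T U"
proof (cases "A \<subseteq> T")
  case True
  then show ?thesis using ring_prod_upper1 by blast
next
  case False
  have A_interm: "A \<in> interm R S"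
    using atoms_in_interm[OF base_in_interm A] .
  have "T \<inter> A \<in> interm R A"
    using T A_interm subring_Int[of T A] by (auto simp: interm_def)
  then have "T \<inter> A = R"
    using A False by (auto simp: atoms_def minimal_ext_def)
  have "T \<inter> ring_prod U A = ring_prod (T \<inter> U) (T \<inter> A)"
    using distrib T U(1) A_interm unfolding distributive_ext_def by blast
  also have "\<dots> = R"
    using U(2) \<open>T \<inter> A = R\<close> ring_prod_idem[OF subring_R] by simp
  finally have "ring_prod U A = U"
    using U_max ring_prod_in_interm[OF subring_S U(1) A_interm] ring_prod_upper1 by blast
  then show ?thesis
    using ring_prod_upper2[of A U] ring_prod_upper2[of U T] by blast
qed

lemma boolean_if_socle_eq_top:
  assumes distrib: "distributive_ext R S" and socle: "socle R S = S"
  shows "boolean_ext R S"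
  unfolding boolean_ext_def
proof (intro conjI ballI)
  fix T assume T: "T \<in> interm R S"
  let ?X = "{U \<in> interm R S. T \<inter> U = R}"
  have "R \<in> ?X"
    using T base_in_interm by (auto simp: interm_def)
  then obtain U where U: "U \<in> ?X" and U_max: "\<And>V. V \<in> ?X \<Longrightarrow> \<not> U \<subset> V"
    using FCP_has_maximal[OF FCP, of ?X] by blast
  have "socle R S \<subseteq> ring_prod T U"
  proof (rule socle_least)
    show "subring (ring_prod T U)" "R \<subseteq> ring_prod T U"
      using ring_prod_in_interm[OF subring_S T] U by (auto simp: interm_def)
    show "A \<subseteq> ring_prod T U" if "A \<in> atoms R S" for A
      using atom_subset_prod_if_maximal_disjoint[OF distrib T _ _ _ that] U U_max by blast
  qed
  with socle ring_prod_in_interm[OF subring_S T] U have "ring_prod T U = S"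
    by (auto simp: interm_def)
  with U show "\<exists>U\<in>interm R S. T \<inter> U = R \<and> ring_prod T U = S"
    by blast
qed (rule distrib)

end

theorem corollary8p31:
  fixes R S :: "'a::comm_ring_1 set"
  assumes "subring R" and "subring S" and "R \<subset> S"
    and "FCP R S" and "distributive_ext R S"
  shows "(enat (loewy_length R S) = ext_length R S \<longleftrightarrow> is_chain_ext R S)
         \<and> (is_chain_ext R S \<longrightarrow> interm R S = loewy R S ` {0..loewy_length R S})
         \<and> (loewy_length R S = 1 \<longleftrightarrow> boolean_ext R S)"
proof (intro conjI impI)
  interpret fcp_extension R S
    using assms(1-4) by unfold_locales auto
  show "enat (loewy_length R S) = ext_length R S \<longleftrightarrow> is_chain_ext R S"
    using chain_iff_ext_length_eq_loewy_length by auto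
  show "interm R S = loewy R S ` {0..loewy_length R S}" if "is_chain_ext R S"
    using that by (rule interm_eq_loewy_series_if_chain)
  have "loewy_length R S = 1 \<longleftrightarrow> socle R S = S"
    using assms(3) by (intro loewy_length_eq_1_iff) blast
  also have "\<dots> \<longleftrightarrow> boolean_ext R S"
    using socle_eq_top_if_boolean boolean_if_socle_eq_top[OF assms(5)] by blast
  finally show "loewy_length R S = 1 \<longleftrightarrow> boolean_ext R S" .
qed

end
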